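(* Let $\mathbb{k}$ be a field of characteristic $0$, $\mathfrak{M}$ a monomial group, and $(\epsilon_i)_{i\in I}$ a summable family in $\mathbb{k}[[\mathfrak{M}]]^{\prec1}$. Let $E$ range over the finite subsets of $I$. Then the family $\big(\prod_{i\in E}\epsilon_i\big)_E$ is summable and $$\exp\Big(\sum_i\log(1+\epsilon_i)\Big)=\sum_E\prod_{i\in E}\epsilon_i.$$
   Context: A monomial group is a (multiplicatively written) totally ordered abelian group $\mathfrak{M}$ with order $\prec$. A subset is well-based if it has no infinite strictly increasing sequence. $\mathbb{k}[[\mathfrak{M}]]$ is the Hahn field of formal series $\sum f_{\mathfrak{m}}\mathfrak{m}$ with well-based support; $\mathbb{k}[[\mathfrak{M}]]^{\prec1}$ consists of the series with support in $\{\mathfrak{m}\prec1\}$. A family $(f_i)_{i\in I}$ ($I$ a set) is summable if the union of the supports is well-based and each monomial lies in only finitely many supports; its sum is coefficientwise. For $h\in\mathbb{k}[[\mathfrak{M}]]^{\prec1}$: $\exp(h)=\sum_{i\ge0}h^i/i!$ and $\log(1+h)=\sum_{j\ge1}(-1)^{j-1}h^j/j$ (these sums exist). The empty product is $1$. *)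

theory Defs
  imports Main "HOL-Library.FuncSet"
begin

text \<open>
  The (multiplicatively written) totally ordered
  abelian monomial group is represented by a type of class linordered_ab_group_add,
  written additively: monomial product = +, monomial 1 = 0, and the order
  \<prec> is <.  So m \<prec> 1 reads m < 0.  A series is a coefficient
  function from monomials to the coefficient field.
\<close>

definition well_based :: "'m::order set \<Rightarrow> bool" where
  "well_based S \<longleftrightarrow> \<not> (\<exists>f::nat \<Rightarrow> 'm. (\<forall>n. f n \<in> S) \<and> (\<forall>n. f n < f (Suc n)))"

definition hsupp :: "('m \<Rightarrow> 'k::zero) \<Rightarrow> 'm set" where
  "hsupp f = {m. f m \<noteq> 0}"

definition is_hahn :: "('m::order \<Rightarrow> 'k::zero) \<Rightarrow> bool" where
  "is_hahn f \<longleftrightarrow> well_based (hsupp f)"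

definition is_hahn_infinitesimal :: "('m::linordered_ab_group_add \<Rightarrow> 'k::zero) \<Rightarrow> bool" where
  "is_hahn_infinitesimal f \<longleftrightarrow> is_hahn f \<and> hsupp f \<subseteq> {m. m < 0}"

definition hsummable :: "('i \<Rightarrow> 'm::order \<Rightarrow> 'k::zero) \<Rightarrow> 'i set \<Rightarrow> bool" where
  "hsummable F I \<longleftrightarrow> well_based (\<Union>i\<in>I. hsupp (F i)) \<and> (\<forall>m. finite {i\<in>I. F i m \<noteq> 0})"

definition hsum :: "('i \<Rightarrow> 'm \<Rightarrow> 'k::comm_monoid_add) \<Rightarrow> 'i set \<Rightarrow> 'm \<Rightarrow> 'k" where
  "hsum F I = (\<lambda>m. \<Sum>i\<in>{i\<in>I. F i m \<noteq> 0}. F i m)"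

definition hone :: "'m::zero \<Rightarrow> 'k::{zero,one}" where
  "hone = (\<lambda>m. if m = 0 then 1 else 0)"

definition hscale :: "'k::times \<Rightarrow> ('m \<Rightarrow> 'k) \<Rightarrow> 'm \<Rightarrow> 'k" where
  "hscale c f = (\<lambda>m. c * f m)"

definition hadd :: "('m \<Rightarrow> 'k::plus) \<Rightarrow> ('m \<Rightarrow> 'k) \<Rightarrow> 'm \<Rightarrow> 'k" where
  "hadd f g = (\<lambda>m. f m + g m)"

definition hmul :: "('m::ab_group_add \<Rightarrow> 'k::comm_ring_1) \<Rightarrow> ('m \<Rightarrow> 'k) \<Rightarrow> 'm \<Rightarrow> 'k" where
  "hmul f g = (\<lambda>m. \<Sum>a\<in>{a. f a \<noteq> 0 \<and> g (m - a) \<noteq> 0}. f a * g (m - a))"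

primrec hpow :: "('m::ab_group_add \<Rightarrow> 'k::comm_ring_1) \<Rightarrow> nat \<Rightarrow> 'm \<Rightarrow> 'k" where
  "hpow f 0 = hone"
| "hpow f (Suc n) = hmul f (hpow f n)"

text \<open>Finite product \<prod>_{i\<in>E} f_i, by the multinomial coefficient formula
  (this is the iterated Cauchy product; the empty product is hone).\<close>
definition hprod :: "('i \<Rightarrow> 'm::ab_group_add \<Rightarrow> 'k::comm_ring_1) \<Rightarrow> 'i set \<Rightarrow> 'm \<Rightarrow> 'k" where
  "hprod F E = (\<lambda>m. \<Sum>a\<in>{a\<in>E \<rightarrow>\<^sub>E UNIV. (\<Sum>i\<in>E. a i) = m \<and> (\<forall>i\<in>E. F i (a i) \<noteq> 0)}.
                      \<Prod>i\<in>E. F i (a i))"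

definition hexp :: "('m::ab_group_add \<Rightarrow> 'k::field_char_0) \<Rightarrow> 'm \<Rightarrow> 'k" where
  "hexp h = hsum (\<lambda>i. hscale (1 / fact i) (hpow h i)) UNIV"

definition hlog1p :: "('m::ab_group_add \<Rightarrow> 'k::field_char_0) \<Rightarrow> 'm \<Rightarrow> 'k" where
  "hlog1p h = hsum (\<lambda>j. hscale ((-1) ^ (j - 1) / of_nat j) (hpow h j)) {1..}"

end

(*
  Let S be the union of the supports of the \<epsilon> i, a well-based set of infinitesimal monomials.
  By Neumann's lemma the monoid generated by S is well-based, every monomial m has only finitely
  many factorizations m = x y inside it, and m is a product of at most N generators.  Hence the
  coefficient of m in any series built from the \<epsilon> i by products and power series depends only
  on their coefficients at the finitely many factors of m, and only finitely many \<epsilon> i have a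
  nonzero coefficient there.  Truncating at the factors of m turns the computation into one with
  finitely supported series, in which series of positive order are nilpotent of order N + 1.
  There the formal identities exp (x + y) = exp x exp y and exp (log (1 + x)) = 1 + x give
  exp (\<Sum>i. log (1 + \<epsilon> i)) = (\<Prod>i. 1 + \<epsilon> i) at m, and expanding the finite product gives
  the sum over E of the products of the \<epsilon> i with i in E.
*)

theory Submission
  imports Defs "HOL-Library.Infinite_Set" "HOL-Library.Poly_Mapping" "HOL-Library.Product_Lexorder"
    "HOL-Computational_Algebra.Formal_Power_Series"
begin

lemma well_based_subset: "well_based B \<Longrightarrow> A \<subseteq> B \<Longrightarrow> well_based A"
  unfolding well_based_def by blast

lemma well_based_iff_wf: "well_based S \<longleftrightarrow> wf {(y, x). x \<in> S \<and> y \<in> S \<and> x < y}"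
  unfolding well_based_def wf_iff_no_infinite_down_chain by auto

lemma well_based_iff_no_strict_mono:
  "well_based A \<longleftrightarrow> \<not> (\<exists>g :: nat \<Rightarrow> 'a::order. strict_mono g \<and> range g \<subseteq> A)"
  unfolding well_based_def strict_mono_Suc_iff by blast

lemma well_based_image:
  assumes "well_based A" "\<And>a b. a \<in> A \<Longrightarrow> b \<in> A \<Longrightarrow> f a < f b \<Longrightarrow> a < b"
  shows "well_based (f ` A)"
  unfolding well_based_def
proof
  assume "\<exists>y. (\<forall>n. y n \<in> f ` A) \<and> (\<forall>n. y n < y (Suc n))"
  then obtain y where y: "\<And>n. y n \<in> f ` A" "\<And>n. y n < y (Suc n)" by blast
  define x where "x n = inv_into A f (y n)" for n
  have x: "x n \<in> A" "f (x n) = y n" for n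
    using y(1) by (simp_all add: x_def inv_into_into f_inv_into_f)
  have "x n < x (Suc n)" for n
    using assms(2)[OF x(1) x(1)] y(2) by (simp add: x(2))
  with x(1) assms(1) show False unfolding well_based_def by blast
qed

lemma well_based_nat_finite: "well_based (A :: nat set) \<Longrightarrow> finite A"
proof (rule ccontr)
  assume "well_based A" "infinite A"
  then obtain r :: "nat \<Rightarrow> nat" where "strict_mono r" "\<forall>n. r n \<in> A"
    using infinite_enumerate by blast
  then have "\<forall>n. r n \<in> A" "\<forall>n. r n < r (Suc n)" by (simp_all add: strict_mono_Suc_iff)
  with \<open>well_based A\<close> show False unfolding well_based_def by blast
qed

lemma well_based_has_max:
  fixes S :: "'a::linorder set"
  assumes "well_based S" "X \<subseteq> S" "x \<in> X"
  obtains z where "z \<in> X" "\<And>y. y \<in> X \<Longrightarrow> y \<le> z"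
  using assms(1,3) unfolding well_based_iff_wf
  by (rule wfE_min) (use assms(2) in \<open>force simp: not_less[symmetric]\<close>)

lemma well_based_decseq_subseq:
  fixes a :: "nat \<Rightarrow> 'a::linorder"
  assumes "well_based S" "range a \<subseteq> S"
  obtains \<phi> where "strict_mono \<phi>" "decseq (a \<circ> \<phi>)"
proof -
  obtain f where f: "strict_mono f" "monoseq (a \<circ> f)"
    using seq_monosub[of a] by (auto simp: comp_def)
  show thesis
  proof (cases "decseq (a \<circ> f)")
    case True
    with f(1) show ?thesis by (rule that)
  next
    case False
    with f(2) have inc: "incseq (a \<circ> f)" by (simp add: monoseq_iff)
    have "range (a \<circ> f) \<subseteq> S" using assms(2) by auto
    then obtain z where "z \<in> range (a \<circ> f)" "\<And>y. y \<in> range (a \<circ> f) \<Longrightarrow> y \<le> z"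
      using well_based_has_max[OF assms(1)] by (metis rangeI)
    then obtain n0 where n0: "\<And>n. a (f n) \<le> a (f n0)" by auto
    have "a (f (n + n0)) = a (f n0)" for n
      using inc n0[of "n + n0"] by (metis comp_apply antisym incseqD le_add2)
    moreover have "strict_mono (\<lambda>n. f (n + n0))"
      using f(1) by (simp add: strict_mono_def)
    ultimately show ?thesis by (intro that[of "\<lambda>n. f (n + n0)"]) (auto simp: decseq_def)
  qed
qed

lemma finite_factorizations:
  fixes A B :: "'m::linordered_ab_group_add set"
  assumes A: "well_based A" and B: "well_based B"
  shows "finite {a \<in> A. m - a \<in> B}"
proof (rule ccontr)
  assume "infinite {a \<in> A. m - a \<in> B}"
  then obtain f :: "nat \<Rightarrow> 'm" where f: "inj f" "range f \<subseteq> {a \<in> A. m - a \<in> B}"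
    using infinite_countable_subset by blast
  then obtain \<phi> where \<phi>: "strict_mono \<phi>" "decseq (f \<circ> \<phi>)"
    using well_based_decseq_subseq[OF A, of f] f(2) by blast
  have "f (\<phi> (Suc n)) < f (\<phi> n)" for n
    using \<phi> f(1) by (metis comp_apply decseq_SucD injD less_not_refl order_le_neq_trans strict_monoD lessI)
  then have "\<exists>h. (\<forall>n. h n \<in> B) \<and> (\<forall>n. h n < h (Suc n))"
    using f(2) by (intro exI[of _ "\<lambda>n. m - f (\<phi> n)"]) auto
  with B show False unfolding well_based_def by blast
qed

section \<open>Neumann's lemma\<close>

definition extendable :: "'a::order set \<Rightarrow> 'a list \<Rightarrow> bool" where
  "extendable A xs \<longleftrightarrow> (\<exists>h. strict_mono h \<and> range h \<subseteq> A \<and> xs = map h [0..<length xs])"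

lemma extendable_map: "strict_mono h \<Longrightarrow> range h \<subseteq> A \<Longrightarrow> extendable A (map h [0..<k])"
  unfolding extendable_def by auto

lemma extendable_snoc:
  assumes "extendable A xs"
  obtains p where "extendable A (xs @ [p])"
proof -
  obtain h where h: "strict_mono h" "range h \<subseteq> A" "xs = map h [0..<length xs]"
    using assms unfolding extendable_def by blast
  then have "xs @ [h (length xs)] = map h [0..<Suc (length xs)]" by simp
  with h(1,2) show thesis by (metis that extendable_map)
qed

text \<open>Nash-Williams' minimal bad sequence construction, for strictly increasing sequences:
  at each index pick an element of minimal weight among those that still extend the
  prefix chosen so far to a strictly increasing sequence in \<open>A\<close>.\<close>
lemma minimal_strict_mono_sequence:
  fixes A :: "'a::order set" and weight :: "'a \<Rightarrow> nat" and g0 :: "nat \<Rightarrow> 'a"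
  assumes "strict_mono g0" "range g0 \<subseteq> A"
  obtains g :: "nat \<Rightarrow> 'a" where "strict_mono g" "range g \<subseteq> A"
    and "\<And>h k. strict_mono (h :: nat \<Rightarrow> 'a) \<Longrightarrow> range h \<subseteq> A \<Longrightarrow> (\<And>i. i < k \<Longrightarrow> h i = g i) \<Longrightarrow>
           weight (g k) \<le> weight (h k)"
proof -
  define pick where "pick xs = arg_min weight (\<lambda>p. extendable A (xs @ [p]))" for xs
  have pick: "extendable A (xs @ [pick xs]) \<and> (\<forall>p. extendable A (xs @ [p]) \<longrightarrow> weight (pick xs) \<le> weight p)"
    if xs: "extendable A xs" for xs
  proof -
    obtain p where "extendable A (xs @ [p])" using extendable_snoc[OF xs] .
    then show ?thesis unfolding pick_def by (rule arg_min_nat_lemma)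
  qed
  define g where "g k = pick (((\<lambda>xs. xs @ [pick xs]) ^^ k) [])" for k
  have "((\<lambda>xs. xs @ [pick xs]) ^^ k) [] = map g [0..<k]" for k
    by (induction k) (simp_all add: g_def)
  then have g_eq: "g k = pick (map g [0..<k])" for k by (simp add: g_def[of k])
  have extendable_g: "extendable A (map g [0..<k])" for k
  proof (induction k)
    case 0
    show ?case using extendable_map[OF assms, of 0] by simp
  next
    case (Suc k)
    then show ?case using pick[of "map g [0..<k]"] by (simp add: g_eq[of k])
  qed
  have g_approx: "\<exists>h. strict_mono h \<and> range h \<subseteq> A \<and> (\<forall>i\<le>k. h i = g i)" for k
    using extendable_g[of "Suc k"] unfolding extendable_def
    by (auto simp: map_eq_conv less_Suc_eq_le simp del: upt_Suc)
  show thesis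
  proof
    show "range g \<subseteq> A"
    proof clarify
      fix k
      obtain h where "range h \<subseteq> A" "h k = g k" using g_approx[of k] by blast
      then show "g k \<in> A" by (metis rangeI subsetD)
    qed
    have "g k < g (Suc k)" for k
    proof -
      obtain h where "strict_mono h" "\<forall>i\<le>Suc k. h i = g i" using g_approx[of "Suc k"] by blast
      then show ?thesis using strict_monoD[of h k "Suc k"] by simp
    qed
    then show "strict_mono g" by (simp add: strict_mono_Suc_iff)
  next
    fix h k
    assume h: "strict_mono h" "range h \<subseteq> A" "\<And>i. i < k \<Longrightarrow> h i = g i"
    have "map g [0..<k] @ [h k] = map h [0..<Suc k]" using h(3) by simp
    then have "extendable A (map g [0..<k] @ [h k])" using extendable_map[OF h(1,2)] by metis
    then show "weight (g k) \<le> weight (h k)" using pick[OF extendable_g[of k]] by (simp add: g_eq[of k])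
  qed
qed

inductive sum_rep :: "'m::monoid_add set \<Rightarrow> 'm \<Rightarrow> nat \<Rightarrow> bool" for S where
  zero: "sum_rep S 0 0"
| add: "s \<in> S \<Longrightarrow> sum_rep S x n \<Longrightarrow> sum_rep S (s + x) (Suc n)"

inductive_cases sum_rep_0E: "sum_rep S x 0"
inductive_cases sum_rep_SucE: "sum_rep S x (Suc n)"

lemma sum_rep_nonpos:
  fixes S :: "'m::ordered_ab_group_add set"
  assumes "S \<subseteq> {x. x < 0}" "sum_rep S x n"
  shows "x \<le> 0"
  using assms(2)
proof induction
  case (add s x n)
  then have "s \<le> 0" using assms(1) by auto
  then show ?case using add.IH by (rule add_nonpos_nonpos)
qed simp

lemma sum_rep_neg:
  fixes S :: "'m::ordered_ab_group_add set"
  assumes "S \<subseteq> {x. x < 0}" "sum_rep S x n" "0 < n"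
  shows "x < 0"
proof -
  obtain n' where "n = Suc n'" using assms(3) by (cases n) auto
  then obtain s y where "s \<in> S" "sum_rep S y n'" "x = s + y"
    using assms(2) by (auto elim: sum_rep_SucE)
  then show ?thesis using assms(1) sum_rep_nonpos[OF assms(1)] by (auto intro: add_neg_nonpos)
qed

lemma sum_rep_add:
  fixes S :: "'m::comm_monoid_add set"
  shows "sum_rep S x j \<Longrightarrow> sum_rep S y l \<Longrightarrow> sum_rep S (x + y) (j + l)"
  by (induction rule: sum_rep.induct) (auto simp: add.assoc intro: sum_rep.add)

lemma sum_rep_singleton: "s \<in> S \<Longrightarrow> sum_rep S s 1"
  using sum_rep.add[OF _ sum_rep.zero, of s S] by simp

lemma lex_less_diff:
  fixes x1 x2 s1 s2 :: "'m::linordered_ab_group_add" and n1 n2 :: nat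
  assumes "(x1, n1) < (x2, n2)" "s2 \<le> s1" "0 < n1"
  shows "(x1 - s1, n1 - 1) < (x2 - s2, n2 - 1)"
proof (cases "x1 < x2")
  case True
  have "x1 - s1 \<le> x1 - s2" using assms(2) by simp
  also have "\<dots> < x2 - s2" using True by simp
  finally show ?thesis by simp
next
  case False
  with assms(1) have "x1 \<le> x2" "n1 < n2" by auto
  then show ?thesis using diff_mono[OF \<open>x1 \<le> x2\<close> assms(2)] assms(3) by auto
qed

lemma sum_rep_le_zero:
  fixes S :: "'m::ordered_ab_group_add set"
  assumes "S \<subseteq> {x. x < 0}" "sum_rep S x n"
  shows "(x, n) \<le> (0, 0)"
proof (cases n)
  case (Suc n')
  then show ?thesis using sum_rep_neg[OF assms] by simp
qed (use assms(2) in \<open>auto elim: sum_rep_0E\<close>)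

text \<open>The new bad sequence of Neumann's proof: follow \<open>g\<close> up to \<open>\<phi> 0\<close>, then the subsequence
  \<open>g \<circ> \<phi>\<close> with the generators \<open>s \<circ> \<phi>\<close> removed.\<close>
lemma strict_mono_splice_diff:
  fixes g :: "nat \<Rightarrow> 'm::linordered_ab_group_add \<times> nat" and s :: "nat \<Rightarrow> 'm"
  assumes g: "strict_mono g" "\<And>k. 0 < snd (g k)" and s: "\<And>k. s k < 0"
    and \<phi>: "strict_mono \<phi>" "decseq (s \<circ> \<phi>)"
  defines "h k \<equiv> if k < \<phi> 0 then g k
                   else (fst (g (\<phi> (k - \<phi> 0))) - s (\<phi> (k - \<phi> 0)), snd (g (\<phi> (k - \<phi> 0))) - 1)"
  shows "strict_mono h"
proof -
  have "h k < h (Suc k)" for k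
  proof -
    consider "Suc k < \<phi> 0" | "Suc k = \<phi> 0" | "\<phi> 0 \<le> k" by linarith
    then show ?thesis
    proof cases
      case 1
      then show ?thesis using g(1) by (simp add: h_def strict_mono_Suc_iff)
    next
      case 2
      have "g k < g (\<phi> 0)" using 2 g(1) by (simp add: strict_mono_less)
      then have "fst (g k) \<le> fst (g (\<phi> 0))" by (auto simp: less_prod_def)
      also have "\<dots> < fst (g (\<phi> 0)) - s (\<phi> 0)" using s[of "\<phi> 0"] by simp
      finally show ?thesis using 2 by (simp add: h_def less_prod_def)
    next
      case 3
      define i where "i = k - \<phi> 0"
      have k: "k = i + \<phi> 0" "Suc k - \<phi> 0 = Suc i" using 3 by (simp_all add: i_def)
      have "g (\<phi> i) < g (\<phi> (Suc i))" using g(1) \<phi>(1) by (simp add: strict_mono_less)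
      moreover have "s (\<phi> (Suc i)) \<le> s (\<phi> i)" using decseq_SucD[OF \<phi>(2)] by simp
      ultimately have "(fst (g (\<phi> i)) - s (\<phi> i), snd (g (\<phi> i)) - 1)
          < (fst (g (\<phi> (Suc i))) - s (\<phi> (Suc i)), snd (g (\<phi> (Suc i))) - 1)"
        using g(2)[of "\<phi> i"] by (metis lex_less_diff prod.collapse)
      then show ?thesis using k by (simp add: h_def)
    qed
  qed
  then show ?thesis by (simp add: strict_mono_Suc_iff)
qed

text \<open>Take a strictly increasing sequence of pairs that is minimal in the number of summands,
  split each term as a generator plus a remainder, and pass to a subsequence along which the
  generators decrease; dropping them gives a strictly increasing sequence that has fewer summands
  at one index, contradicting minimality.\<close>
theorem neumann_lemma:
  fixes S :: "'m::linordered_ab_group_add set"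
  assumes neg: "S \<subseteq> {x. x < 0}" and wb: "well_based S"
  shows "well_based {(x, n). sum_rep S x n}"
proof (rule ccontr)
  define P where "P = {(x, n). sum_rep S x n}"
  assume "\<not> well_based {(x, n). sum_rep S x n}"
  then obtain g0 :: "nat \<Rightarrow> 'm \<times> nat" where "strict_mono g0" "range g0 \<subseteq> P"
    unfolding well_based_iff_no_strict_mono P_def by blast
  then obtain g :: "nat \<Rightarrow> 'm \<times> nat" where g: "strict_mono g" "range g \<subseteq> P"
    and minimal: "\<And>h k. strict_mono (h :: nat \<Rightarrow> 'm \<times> nat) \<Longrightarrow> range h \<subseteq> P \<Longrightarrow>
      (\<And>i. i < k \<Longrightarrow> h i = g i) \<Longrightarrow> snd (g k) \<le> snd (h k)"
    by (rule minimal_strict_mono_sequence[where weight = snd]) blast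
  have rep: "sum_rep S (fst (g k)) (snd (g k))" for k
  proof -
    have "g k \<in> P" using g(2) by blast
    then show ?thesis by (simp add: P_def split_beta)
  qed
  have pos: "0 < snd (g k)" for k
  proof (rule ccontr)
    assume "\<not> 0 < snd (g k)"
    then have "g k = (0, 0)" using rep[of k] by (auto elim: sum_rep_0E simp: prod_eq_iff)
    moreover have "g k < g (Suc k)" using g(1) by (simp add: strict_mono_Suc_iff)
    ultimately show False using sum_rep_le_zero[OF neg rep[of "Suc k"]] by simp
  qed
  have "\<exists>s y. s \<in> S \<and> sum_rep S y (snd (g k) - 1) \<and> fst (g k) = s + y" for k
  proof -
    have "sum_rep S (fst (g k)) (Suc (snd (g k) - 1))" using rep pos[of k] by simp
    then show ?thesis by (rule sum_rep_SucE) blast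
  qed
  then obtain s y where s: "\<And>k. s k \<in> S" and y: "\<And>k. sum_rep S (y k) (snd (g k) - 1)"
    and split: "\<And>k. fst (g k) = s k + y k"
    by metis
  obtain \<phi> where \<phi>: "strict_mono \<phi>" "decseq (s \<circ> \<phi>)"
    using well_based_decseq_subseq[OF wb, of s] s by blast
  define h where "h k = (if k < \<phi> 0 then g k
      else (fst (g (\<phi> (k - \<phi> 0))) - s (\<phi> (k - \<phi> 0)), snd (g (\<phi> (k - \<phi> 0))) - 1))" for k
  have "strict_mono h"
    unfolding h_def using g(1) pos s neg \<phi> by (intro strict_mono_splice_diff) auto
  moreover have "range h \<subseteq> P" using g(2) y split by (auto simp: h_def P_def algebra_simps)
  ultimately have "snd (g (\<phi> 0)) \<le> snd (h (\<phi> 0))" by (rule minimal) (simp add: h_def)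
  then show False using pos[of "\<phi> 0"] by (simp add: h_def)
qed

corollary well_based_sum_reps:
  fixes S :: "'m::linordered_ab_group_add set"
  assumes "S \<subseteq> {x. x < 0}" "well_based S"
  shows "well_based {x. \<exists>n. sum_rep S x n}"
proof -
  have "well_based (fst ` {(x, n). sum_rep S x n})"
    using neumann_lemma[OF assms] by (rule well_based_image) (auto simp: less_prod_def)
  moreover have "fst ` {(x, n). sum_rep S x n} = {x. \<exists>n. sum_rep S x n}" by force
  ultimately show ?thesis by simp
qed

corollary finite_sum_rep_lengths:
  fixes S :: "'m::linordered_ab_group_add set"
  assumes "S \<subseteq> {x. x < 0}" "well_based S"
  shows "finite {n. sum_rep S m n}"
proof (rule well_based_nat_finite)
  have "well_based {(x, n). x = m \<and> sum_rep S x n}"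
    using neumann_lemma[OF assms] by (rule well_based_subset) auto
  then have "well_based (snd ` {(x, n). x = m \<and> sum_rep S x n})"
    by (rule well_based_image) (auto simp: less_prod_def)
  moreover have "snd ` {(x, n). x = m \<and> sum_rep S x n} = {n. sum_rep S m n}" by force
  ultimately show "well_based {n. sum_rep S m n}" by simp
qed

section \<open>Finitely supported series\<close>

abbreviation lookup :: "('a \<Rightarrow>\<^sub>0 'b::zero) \<Rightarrow> 'a \<Rightarrow> 'b" where
  "lookup \<equiv> Poly_Mapping.lookup"

abbreviation keys :: "('a \<Rightarrow>\<^sub>0 'b::zero) \<Rightarrow> 'a set" where
  "keys \<equiv> Poly_Mapping.keys"

abbreviation const_pm :: "'k::zero \<Rightarrow> 'm::zero \<Rightarrow>\<^sub>0 'k" where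
  "const_pm c \<equiv> Poly_Mapping.single 0 c"

lemma lookup_mult_eq_sum:
  fixes p q :: "'m::ab_group_add \<Rightarrow>\<^sub>0 'k::comm_semiring_0"
  assumes "finite K" "keys p \<subseteq> K"
  shows "lookup (p * q) n = (\<Sum>a\<in>K. lookup p a * lookup q (n - a))"
proof -
  have inner: "Sum_any (\<lambda>b. if n = a + b then lookup q b else 0) = lookup q (n - a)" for a
  proof -
    have "(\<lambda>b. if n = a + b then lookup q b else 0) = (\<lambda>b. if b = n - a then lookup q b else 0)"
      by (auto simp: fun_eq_iff algebra_simps)
    then show ?thesis by (simp only: Sum_any.delta)
  qed
  have "lookup (p * q) n = Sum_any (\<lambda>a. lookup p a * lookup q (n - a))"
    unfolding lookup_mult when_def inner ..
  also have "\<dots> = (\<Sum>a\<in>K. lookup p a * lookup q (n - a))"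
  proof (rule Sum_any.expand_superset)
    show "{a. lookup p a * lookup q (n - a) \<noteq> 0} \<subseteq> K"
    proof
      fix a assume "a \<in> {a. lookup p a * lookup q (n - a) \<noteq> 0}"
      then have "a \<in> keys p" by (auto simp: in_keys_iff)
      then show "a \<in> K" using assms(2) by blast
    qed
  qed (rule assms(1))
  finally show ?thesis .
qed

lemma lookup_const_mult:
  fixes p :: "'m::ab_group_add \<Rightarrow>\<^sub>0 'k::comm_semiring_0"
  shows "lookup (const_pm c * p) n = c * lookup p n"
proof -
  have "lookup (const_pm c * p) n = (\<Sum>a\<in>{0}. lookup (const_pm c) a * lookup p (n - a))"
    by (rule lookup_mult_eq_sum) auto
  then show ?thesis by simp
qed

lemma hsupp_lookup: "hsupp (lookup p) = keys p"
  by (auto simp: hsupp_def in_keys_iff)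

lemma lookup_mult_eq_hmul:
  fixes p q :: "'m::ab_group_add \<Rightarrow>\<^sub>0 'k::comm_ring_1"
  shows "lookup (p * q) = hmul (lookup p) (lookup q)"
proof
  fix n
  have "lookup (p * q) n = (\<Sum>a\<in>keys p. lookup p a * lookup q (n - a))"
    by (rule lookup_mult_eq_sum) auto
  also have "\<dots> = (\<Sum>a\<in>{a. lookup p a \<noteq> 0 \<and> lookup q (n - a) \<noteq> 0}. lookup p a * lookup q (n - a))"
    by (rule sum.mono_neutral_right) (auto simp: in_keys_iff)
  finally show "lookup (p * q) n = hmul (lookup p) (lookup q) n" by (simp add: hmul_def)
qed

lemma lookup_power_eq_hpow:
  fixes p :: "'m::ab_group_add \<Rightarrow>\<^sub>0 'k::comm_ring_1"
  shows "lookup (p ^ j) = hpow (lookup p) j"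
proof (induction j)
  case 0
  then show ?case by (simp add: lookup_one hone_def when_def fun_eq_iff eq_commute)
next
  case (Suc j)
  then show ?case by (simp add: lookup_mult_eq_hmul)
qed

lemma const_pm_mult: "const_pm (a * b) = const_pm a * (const_pm b :: 'm::comm_monoid_add \<Rightarrow>\<^sub>0 'k::comm_semiring_1)"
  by (simp add: mult_single)

lemma const_pm_sum: "const_pm (\<Sum>i\<in>A. f i) = (\<Sum>i\<in>A. const_pm (f i))"
  by (induction A rule: infinite_finite_induct) (simp_all add: single_add)

lemma poly_mapping_eq_sum_single:
  assumes "finite K" "keys p \<subseteq> K"
  shows "p = (\<Sum>a\<in>K. Poly_Mapping.single a (lookup p a))"
proof (rule poly_mapping_eqI)
  fix n
  have "(\<Sum>a\<in>K. lookup (Poly_Mapping.single a (lookup p a)) n) = (\<Sum>a\<in>K. if a = n then lookup p a else 0)"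
    by (intro sum.cong) (auto simp: lookup_single when_def)
  also have "\<dots> = lookup p n" using assms by (auto simp: in_keys_iff)
  finally show "lookup p n = lookup (\<Sum>a\<in>K. Poly_Mapping.single a (lookup p a)) n"
    by (simp add: lookup_sum)
qed

lemma prod_single:
  fixes c :: "'i \<Rightarrow> 'k::comm_semiring_1" and a :: "'i \<Rightarrow> 'm::comm_monoid_add"
  shows "(\<Prod>i\<in>E. Poly_Mapping.single (a i) (c i)) = Poly_Mapping.single (\<Sum>i\<in>E. a i) (\<Prod>i\<in>E. c i)"
  by (induction E rule: infinite_finite_induct) (simp_all add: mult_single)

lemma lookup_prod_eq_sum_PiE:
  fixes p :: "'i \<Rightarrow> 'm::comm_monoid_add \<Rightarrow>\<^sub>0 'k::comm_semiring_1"
  assumes "finite E" "finite K" "\<And>i. i \<in> E \<Longrightarrow> keys (p i) \<subseteq> K"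
  shows "lookup (\<Prod>i\<in>E. p i) n = (\<Sum>a\<in>{a \<in> E \<rightarrow>\<^sub>E K. (\<Sum>i\<in>E. a i) = n}. \<Prod>i\<in>E. lookup (p i) (a i))"
proof -
  have "(\<Prod>i\<in>E. p i) = (\<Prod>i\<in>E. \<Sum>b\<in>K. Poly_Mapping.single b (lookup (p i) b))"
    using assms(2,3) by (intro prod.cong refl poly_mapping_eq_sum_single) auto
  also have "\<dots> = (\<Sum>a\<in>E \<rightarrow>\<^sub>E K. Poly_Mapping.single (\<Sum>i\<in>E. a i) (\<Prod>i\<in>E. lookup (p i) (a i)))"
    using assms(1,2) by (simp add: prod_sum_PiE prod_single)
  finally have "lookup (\<Prod>i\<in>E. p i) n =
      (\<Sum>a\<in>E \<rightarrow>\<^sub>E K. if (\<Sum>i\<in>E. a i) = n then \<Prod>i\<in>E. lookup (p i) (a i) else 0)"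
    by (simp add: lookup_sum lookup_single when_def eq_commute)
  also have "\<dots> = (\<Sum>a\<in>{a \<in> E \<rightarrow>\<^sub>E K. (\<Sum>i\<in>E. a i) = n}. \<Prod>i\<in>E. lookup (p i) (a i))"
    using assms(1,2) by (simp add: sum.inter_filter finite_PiE)
  finally show ?thesis .
qed

lemma hsupp_hmul: "x \<in> hsupp (hmul f g) \<Longrightarrow> \<exists>a. f a \<noteq> 0 \<and> g (x - a) \<noteq> 0"
  unfolding hsupp_def hmul_def by (auto elim: sum.not_neutral_contains_not_neutral)

lemma hsupp_hsum: "hsupp (hsum F I) \<subseteq> (\<Union>i\<in>I. hsupp (F i))"
  unfolding hsupp_def hsum_def by (auto elim: sum.not_neutral_contains_not_neutral)

lemma hsupp_hprod:
  "x \<in> hsupp (hprod F E) \<Longrightarrow>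
     \<exists>a\<in>E \<rightarrow>\<^sub>E UNIV. (\<Sum>i\<in>E. a i) = x \<and> (\<forall>i\<in>E. F i (a i) \<noteq> 0)"
  unfolding hsupp_def hprod_def by (auto elim: sum.not_neutral_contains_not_neutral)

unbundle fps_syntax

definition hcompose :: "'k fps \<Rightarrow> ('m::ab_group_add \<Rightarrow> 'k::field_char_0) \<Rightarrow> 'm \<Rightarrow> 'k" where
  "hcompose F h = hsum (\<lambda>k. hscale (F $ k) (hpow h k)) UNIV"

lemma hexp_eq_hcompose: "hexp h = hcompose (fps_exp 1) h"
  by (simp add: hexp_def hcompose_def)

lemma hlog1p_eq_hcompose: "hlog1p h = hcompose (fps_ln 1) h"
proof -
  have "{j \<in> {1..}. hscale ((-1) ^ (j - 1) / of_nat j) (hpow h j) n \<noteq> 0} =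
        {j \<in> UNIV. hscale (fps_ln 1 $ j) (hpow h j) n \<noteq> 0}" for n
    by (auto simp: hscale_def fps_ln_nth)
  moreover have "hscale ((-1) ^ (j - 1) / of_nat j) (hpow h j) n = hscale (fps_ln 1 $ j) (hpow h j) n"
    if "j \<ge> 1" for j n
    using that by (simp add: hscale_def fps_ln_nth)
  ultimately show ?thesis
    unfolding hlog1p_def hcompose_def hsum_def by (intro ext sum.cong) auto
qed

lemma hsupp_hcompose: "hsupp (hcompose F h) \<subseteq> (\<Union>k\<in>{k. F $ k \<noteq> 0}. hsupp (hpow h k))"
proof -
  have "hsupp (hscale (F $ k) (hpow h k)) \<subseteq> (\<Union>k\<in>{k. F $ k \<noteq> 0}. hsupp (hpow h k))" for k
    by (auto simp: hsupp_def hscale_def)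
  then show ?thesis unfolding hcompose_def by (intro order_trans[OF hsupp_hsum] UN_least)
qed

lemma fps_exp_compose_ln: "fps_exp (1 :: 'k::field_char_0) oo fps_ln 1 = 1 + fps_X"
proof -
  have "(fps_exp (1 :: 'k) - 1) oo fps_ln 1 = fps_X"
    using fps_inv_right[of "fps_exp 1 - 1"] fps_ln_fps_exp_inv[of "1 :: 'k"] by simp
  then show ?thesis by (simp add: fps_compose_sub_distrib algebra_simps)
qed

locale infinitesimal_generators =
  fixes S :: "'m::linordered_ab_group_add set"
  assumes S_neg: "S \<subseteq> {x. x < 0}" and S_well_based: "well_based S"
begin

text \<open>In the multiplicative notation of the paper, \<open>sums_ge k\<close> consists of the products of at
  least \<open>k\<close> monomials from \<open>S\<close>; \<open>sums_ge 0\<close> is the monoid generated by \<open>S\<close>.\<close>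
definition sums_ge :: "nat \<Rightarrow> 'm set" where "sums_ge k = {x. \<exists>n\<ge>k. sum_rep S x n}"

lemma well_based_sums_ge: "well_based (sums_ge k)"
  by (rule well_based_subset[OF well_based_sum_reps[OF S_neg S_well_based]]) (auto simp: sums_ge_def)

lemma sums_ge_antimono: "k \<le> l \<Longrightarrow> sums_ge l \<subseteq> sums_ge k"
  unfolding sums_ge_def using order_trans by blast

lemma sums_ge_add: "x \<in> sums_ge k \<Longrightarrow> y \<in> sums_ge l \<Longrightarrow> x + y \<in> sums_ge (k + l)"
  unfolding sums_ge_def using sum_rep_add add_mono by blast

lemma zero_in_sums_ge: "0 \<in> sums_ge 0"
  unfolding sums_ge_def using sum_rep.zero by blast

lemma generators_subset_sums_ge: "S \<subseteq> sums_ge 1"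
  unfolding sums_ge_def using sum_rep_singleton by blast

lemma sum_in_sums_ge: "(\<And>j. j \<in> A \<Longrightarrow> f j \<in> sums_ge 0) \<Longrightarrow> sum f A \<in> sums_ge 0"
  by (induction A rule: infinite_finite_induct)
    (simp_all add: zero_in_sums_ge sums_ge_add[of _ 0 _ 0, simplified])

lemma hsupp_hmul_sums_ge:
  assumes "hsupp f \<subseteq> sums_ge k" "hsupp g \<subseteq> sums_ge l"
  shows "hsupp (hmul f g) \<subseteq> sums_ge (k + l)"
proof
  fix x assume "x \<in> hsupp (hmul f g)"
  then obtain a where "a \<in> hsupp f" "x - a \<in> hsupp g"
    using hsupp_hmul unfolding hsupp_def by blast
  then have "a + (x - a) \<in> sums_ge (k + l)" using assms sums_ge_add by blast
  then show "x \<in> sums_ge (k + l)" by simp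
qed

lemma keys_mult_sums_ge:
  fixes p q :: "'m \<Rightarrow>\<^sub>0 'k::comm_ring_1"
  shows "keys p \<subseteq> sums_ge k \<Longrightarrow> keys q \<subseteq> sums_ge l \<Longrightarrow> keys (p * q) \<subseteq> sums_ge (k + l)"
  using hsupp_hmul_sums_ge[of "lookup p" k "lookup q" l] by (simp add: hsupp_lookup flip: lookup_mult_eq_hmul)

lemma hsupp_hpow_sums_ge: "hsupp f \<subseteq> sums_ge k \<Longrightarrow> hsupp (hpow f j) \<subseteq> sums_ge (k * j)"
proof (induction j)
  case 0
  then show ?case using zero_in_sums_ge by (auto simp: hsupp_def hone_def)
next
  case (Suc j)
  then show ?case using hsupp_hmul_sums_ge[of f k "hpow f j" "k * j"] by simp
qed

lemma keys_power_sums_ge: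
  fixes p :: "'m \<Rightarrow>\<^sub>0 'k::comm_ring_1"
  shows "keys p \<subseteq> sums_ge k \<Longrightarrow> keys (p ^ j) \<subseteq> sums_ge (k * j)"
  using hsupp_hpow_sums_ge[of "lookup p" k j] by (simp add: hsupp_lookup flip: lookup_power_eq_hpow)

lemma keys_prod_sums_ge:
  fixes p :: "'i \<Rightarrow> 'm \<Rightarrow>\<^sub>0 'k::comm_ring_1"
  shows "(\<And>i. i \<in> J \<Longrightarrow> keys (p i) \<subseteq> sums_ge 0) \<Longrightarrow> keys (\<Prod>i\<in>J. p i) \<subseteq> sums_ge 0"
proof (induction J rule: infinite_finite_induct)
  case (insert j J)
  then show ?case using keys_mult_sums_ge[of "p j" 0 "\<Prod>i\<in>J. p i" 0] by simp
qed (use zero_in_sums_ge in simp_all)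

lemma keys_one_plus_sums_ge:
  fixes p :: "'m \<Rightarrow>\<^sub>0 'k::comm_ring_1"
  assumes "keys p \<subseteq> sums_ge 1"
  shows "keys (1 + p) \<subseteq> sums_ge 0"
proof -
  have "keys (1 :: 'm \<Rightarrow>\<^sub>0 'k) \<subseteq> sums_ge 0" using zero_in_sums_ge by simp
  moreover have "keys p \<subseteq> sums_ge 0" using assms sums_ge_antimono[of 0 1] by simp
  ultimately show ?thesis using keys_add[of 1 p] by blast
qed

lemma hsupp_hcompose_sums_ge:
  assumes "hsupp h \<subseteq> sums_ge 1" "\<And>k. F $ k \<noteq> 0 \<Longrightarrow> l \<le> k"
  shows "hsupp (hcompose F h) \<subseteq> sums_ge l"
proof -
  have "hsupp (hpow h k) \<subseteq> sums_ge l" if "F $ k \<noteq> 0" for k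
    using hsupp_hpow_sums_ge[OF assms(1), of k] sums_ge_antimono[OF assms(2)[OF that]] by simp
  then show ?thesis using hsupp_hcompose[of F h] by blast
qed

lemma hsupp_hprod_sums_ge:
  assumes "\<And>i. i \<in> E \<Longrightarrow> hsupp (F i) \<subseteq> sums_ge 0"
  shows "hsupp (hprod F E) \<subseteq> sums_ge 0"
proof
  fix x assume "x \<in> hsupp (hprod F E)"
  then obtain a where "(\<Sum>i\<in>E. a i) = x" "\<forall>i\<in>E. F i (a i) \<noteq> 0"
    using hsupp_hprod by blast
  moreover from this have "(\<Sum>i\<in>E. a i) \<in> sums_ge 0"
    using assms by (intro sum_in_sums_ge) (auto simp: hsupp_def)
  ultimately show "x \<in> sums_ge 0" by simp
qed

lemma hsupp_hsum_hlog1p_sums_ge: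
  fixes \<epsilon> :: "'i \<Rightarrow> 'm \<Rightarrow> 'k::field_char_0"
  assumes "\<And>i. i \<in> I \<Longrightarrow> hsupp (\<epsilon> i) \<subseteq> sums_ge 1"
  shows "hsupp (hsum (\<lambda>i. hlog1p (\<epsilon> i)) I) \<subseteq> sums_ge 1"
proof -
  have "hsupp (hlog1p (\<epsilon> i)) \<subseteq> sums_ge 1" if "i \<in> I" for i
  proof (unfold hlog1p_eq_hcompose, rule hsupp_hcompose_sums_ge[OF assms[OF that]])
    show "1 \<le> k" if "fps_ln 1 $ k \<noteq> (0 :: 'k)" for k using that by (cases k) simp_all
  qed
  then show ?thesis by (intro order_trans[OF hsupp_hsum] UN_least)
qed

end

section \<open>Truncation at the factors of a monomial\<close>

locale truncation = infinitesimal_generators S for S :: "'m::linordered_ab_group_add set" +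
  fixes m :: 'm
begin

text \<open>The coefficient of \<open>m\<close> in a product of series supported in \<open>sums_ge 0\<close> only involves
  coefficients at \<open>factors\<close>, a finite set by Neumann's lemma.\<close>
definition factors :: "'m set" where "factors = {x \<in> sums_ge 0. m - x \<in> sums_ge 0}"

text \<open>If \<open>m \<notin> sums_ge 0\<close>, the maximum is taken over the empty set, but then \<open>factors = {}\<close>
  and the junk value is never used.\<close>
definition height :: nat where "height = Max {n. sum_rep S m n}"

lemma finite_factors: "finite factors"
  unfolding factors_def by (rule finite_factorizations[OF well_based_sums_ge well_based_sums_ge])

lemma factors_subset: "factors \<subseteq> sums_ge 0"
  unfolding factors_def by blast

lemma self_in_factors: "m \<in> sums_ge 0 \<Longrightarrow> m \<in> factors"
  unfolding factors_def using zero_in_sums_ge by simp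

lemma factors_split:
  assumes "n \<in> factors" "a \<in> sums_ge 0" "n - a \<in> sums_ge 0"
  shows "a \<in> factors"
proof -
  have "(m - n) + (n - a) \<in> sums_ge 0"
    using assms sums_ge_add[of "m - n" 0 "n - a" 0] by (simp add: factors_def)
  then show ?thesis using assms(2) by (simp add: factors_def)
qed

lemma factor_in_sums_ge_le_height:
  assumes "x \<in> factors" "x \<in> sums_ge k"
  shows "k \<le> height"
proof -
  obtain j where j: "k \<le> j" "sum_rep S x j" using assms(2) by (auto simp: sums_ge_def)
  obtain j' where "sum_rep S (m - x) j'" using assms(1) by (auto simp: factors_def sums_ge_def)
  from sum_rep_add[OF j(2) this] have "sum_rep S m (j + j')" by simp
  then have "j + j' \<le> height"
    unfolding height_def using finite_sum_rep_lengths[OF S_neg S_well_based] by (intro Max_ge) auto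
  with j(1) show ?thesis by simp
qed

lemma summand_in_factors:
  assumes "n \<in> factors" "finite E" "\<And>j. j \<in> E \<Longrightarrow> a j \<in> sums_ge 0" "(\<Sum>j\<in>E. a j) = n" "i \<in> E"
  shows "a i \<in> factors"
proof (rule factors_split[OF assms(1) assms(3)[OF assms(5)]])
  have "n - a i = (\<Sum>j\<in>E - {i}. a j)"
    using sum.remove[OF assms(2,5), of a] assms(4) by (simp add: algebra_simps)
  then show "n - a i \<in> sums_ge 0" using assms(3) by (auto intro: sum_in_sums_ge)
qed

definition trunc :: "('m \<Rightarrow> 'k::zero) \<Rightarrow> 'm \<Rightarrow>\<^sub>0 'k" where
  "trunc f = Abs_poly_mapping (\<lambda>n. if n \<in> factors then f n else 0)"

lemma lookup_trunc: "lookup (trunc f) n = (if n \<in> factors then f n else 0)"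
proof -
  have "finite {n. (if n \<in> factors then f n else 0) \<noteq> 0}"
    by (rule finite_subset[OF _ finite_factors]) auto
  then show ?thesis unfolding trunc_def by simp
qed

lemma keys_trunc: "keys (trunc f) \<subseteq> factors \<inter> hsupp f"
  by (auto simp: in_keys_iff lookup_trunc hsupp_def split: if_splits)

definition trunc_eq :: "('m \<Rightarrow>\<^sub>0 'k::zero) \<Rightarrow> ('m \<Rightarrow>\<^sub>0 'k) \<Rightarrow> bool" (infix "\<simeq>" 50) where
  "p \<simeq> q \<longleftrightarrow> (\<forall>n\<in>factors. lookup p n = lookup q n)"

lemma trunc_eq_refl [simp]: "p \<simeq> p"
  by (simp add: trunc_eq_def)

lemma trunc_eq_sym: "p \<simeq> q \<Longrightarrow> q \<simeq> p"
  by (simp add: trunc_eq_def)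

lemma trunc_eq_trans [trans]: "p \<simeq> q \<Longrightarrow> q \<simeq> r \<Longrightarrow> p \<simeq> r"
  by (simp add: trunc_eq_def)

lemma trunc_eq_add: "p \<simeq> p' \<Longrightarrow> q \<simeq> q' \<Longrightarrow> p + q \<simeq> p' + q'"
  by (simp add: trunc_eq_def lookup_add)

lemma trunc_eq_sum: "(\<And>i. i \<in> A \<Longrightarrow> p i \<simeq> q i) \<Longrightarrow> (\<Sum>i\<in>A. p i) \<simeq> (\<Sum>i\<in>A. q i)"
  by (simp add: trunc_eq_def lookup_sum)

lemma trunc_eq_const_mult:
  fixes p q :: "'m \<Rightarrow>\<^sub>0 'k::comm_ring_1"
  shows "p \<simeq> q \<Longrightarrow> const_pm c * p \<simeq> const_pm c * q"
  by (simp add: trunc_eq_def lookup_const_mult)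

lemma trunc_eq_zero:
  assumes "keys p \<subseteq> sums_ge (Suc height)"
  shows "p \<simeq> 0"
proof (unfold trunc_eq_def, intro ballI)
  fix n assume n: "n \<in> factors"
  show "lookup p n = lookup 0 n"
  proof (rule ccontr)
    assume "lookup p n \<noteq> lookup 0 n"
    then have "n \<in> sums_ge (Suc height)" using assms by (auto simp: in_keys_iff)
    then show False using factor_in_sums_ge_le_height[OF n] by fastforce
  qed
qed

lemma hmul_factors:
  fixes f g :: "'m \<Rightarrow> 'k::comm_ring_1"
  assumes n: "n \<in> factors" and f: "hsupp f \<subseteq> sums_ge 0" and g: "hsupp g \<subseteq> sums_ge 0"
  shows "hmul f g n = (\<Sum>a\<in>factors. if n - a \<in> factors then f a * g (n - a) else 0)"
proof -
  define A where "A = {a. f a \<noteq> 0 \<and> g (n - a) \<noteq> 0}"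
  have A: "a \<in> factors \<and> n - a \<in> factors" if "a \<in> A" for a
  proof -
    have "a \<in> sums_ge 0" "n - a \<in> sums_ge 0" using that f g unfolding A_def hsupp_def by auto
    then show ?thesis using factors_split[OF n] by force
  qed
  have "hmul f g n = (\<Sum>a\<in>A. f a * g (n - a))" by (simp add: hmul_def A_def)
  also have "\<dots> = (\<Sum>a\<in>factors. if n - a \<in> factors then f a * g (n - a) else 0)"
    using A by (intro sum.mono_neutral_cong_left finite_factors) (auto simp: A_def)
  finally show ?thesis .
qed

lemma hmul_cong_factors:
  fixes f g f' g' :: "'m \<Rightarrow> 'k::comm_ring_1"
  assumes "n \<in> factors"
    and "hsupp f \<subseteq> sums_ge 0" "hsupp g \<subseteq> sums_ge 0" "hsupp f' \<subseteq> sums_ge 0" "hsupp g' \<subseteq> sums_ge 0"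
    and "\<And>a. a \<in> factors \<Longrightarrow> f a = f' a" "\<And>a. a \<in> factors \<Longrightarrow> g a = g' a"
  shows "hmul f g n = hmul f' g' n"
  unfolding hmul_factors[OF assms(1-3)] hmul_factors[OF assms(1,4,5)]
  using assms(6,7) by (intro sum.cong) auto

lemma keys_trunc_sums_ge: "keys (trunc f) \<subseteq> sums_ge 0"
  using keys_trunc factors_subset by blast

lemma trunc_eq_mult:
  fixes p q p' q' :: "'m \<Rightarrow>\<^sub>0 'k::comm_ring_1"
  assumes "keys p \<subseteq> sums_ge 0" "keys q \<subseteq> sums_ge 0" "keys p' \<subseteq> sums_ge 0" "keys q' \<subseteq> sums_ge 0"
    and "p \<simeq> p'" "q \<simeq> q'"
  shows "p * q \<simeq> p' * q'"
  using assms unfolding trunc_eq_def lookup_mult_eq_hmul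
  by (auto simp: hsupp_lookup intro!: hmul_cong_factors)

lemma trunc_eq_power:
  fixes p q :: "'m \<Rightarrow>\<^sub>0 'k::comm_ring_1"
  assumes p: "keys p \<subseteq> sums_ge 0" and q: "keys q \<subseteq> sums_ge 0" and "p \<simeq> q"
  shows "p ^ j \<simeq> q ^ j"
proof (induction j)
  case (Suc j)
  have "keys (p ^ j) \<subseteq> sums_ge 0" "keys (q ^ j) \<subseteq> sums_ge 0"
    using keys_power_sums_ge[OF p, of j] keys_power_sums_ge[OF q, of j] by simp_all
  then show ?case using trunc_eq_mult[OF p _ q _ \<open>p \<simeq> q\<close> Suc] by simp
qed simp

lemma trunc_hmul:
  fixes f g :: "'m \<Rightarrow> 'k::comm_ring_1"
  assumes "hsupp f \<subseteq> sums_ge 0" "hsupp g \<subseteq> sums_ge 0"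
  shows "trunc (hmul f g) \<simeq> trunc f * trunc g"
proof (unfold trunc_eq_def, intro ballI)
  fix n assume n: "n \<in> factors"
  have "hmul f g n = hmul (lookup (trunc f)) (lookup (trunc g)) n"
    using assms keys_trunc_sums_ge[of f] keys_trunc_sums_ge[of g]
    by (intro hmul_cong_factors[OF n]) (auto simp: hsupp_lookup lookup_trunc)
  then show "lookup (trunc (hmul f g)) n = lookup (trunc f * trunc g) n"
    using n by (simp add: lookup_trunc lookup_mult_eq_hmul)
qed

lemma trunc_hpow:
  fixes f :: "'m \<Rightarrow> 'k::comm_ring_1"
  assumes f: "hsupp f \<subseteq> sums_ge 0"
  shows "trunc (hpow f j) \<simeq> trunc f ^ j"
proof (induction j)
  case 0
  show ?case by (simp add: trunc_eq_def lookup_trunc lookup_one hone_def when_def eq_commute)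
next
  case (Suc j)
  have "hsupp (hpow f j) \<subseteq> sums_ge 0" using hsupp_hpow_sums_ge[OF f, of j] by simp
  then have "trunc (hpow f (Suc j)) \<simeq> trunc f * trunc (hpow f j)"
    using trunc_hmul[OF f] by simp
  also have "\<dots> \<simeq> trunc f * trunc f ^ j"
    using keys_trunc_sums_ge keys_power_sums_ge[OF keys_trunc_sums_ge, of f j] Suc
    by (intro trunc_eq_mult) auto
  finally show ?case by simp
qed

section \<open>Formal power series at elements of positive order\<close>

text \<open>Evaluation of a formal power series at an element of order \<open>\<ge> 1\<close>; such elements are
  nilpotent of order \<open>height + 1\<close> up to \<open>\<simeq>\<close>, so the truncation at \<open>height\<close> is harmless.\<close>
definition fps_eval :: "'k fps \<Rightarrow> ('m \<Rightarrow>\<^sub>0 'k) \<Rightarrow> 'm \<Rightarrow>\<^sub>0 'k::comm_ring_1" where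
  "fps_eval F x = (\<Sum>k\<le>height. const_pm (F $ k) * x ^ k)"

lemma keys_const_mult: "keys (const_pm c * p) \<subseteq> keys (p :: 'm \<Rightarrow>\<^sub>0 'k::comm_ring_1)"
  by (auto simp: in_keys_iff lookup_const_mult)

lemma keys_fps_eval:
  fixes x :: "'m \<Rightarrow>\<^sub>0 'k::comm_ring_1"
  assumes "keys x \<subseteq> sums_ge 1"
  shows "keys (fps_eval F x) \<subseteq> sums_ge 0"
proof -
  have "keys (const_pm (F $ k) * x ^ k) \<subseteq> sums_ge 0" for k
    using order_trans[OF order_trans[OF keys_const_mult keys_power_sums_ge[OF assms, of k, simplified]]
        sums_ge_antimono[of 0 k]] by simp
  then show ?thesis unfolding fps_eval_def by (intro order_trans[OF keys_sum] UN_least)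
qed

lemma keys_fps_eval_sums_ge_1:
  fixes x :: "'m \<Rightarrow>\<^sub>0 'k::comm_ring_1"
  assumes "keys x \<subseteq> sums_ge 1" "F $ 0 = 0"
  shows "keys (fps_eval F x) \<subseteq> sums_ge 1"
proof -
  have "keys (const_pm (F $ k) * x ^ k) \<subseteq> sums_ge 1" for k
  proof (cases k)
    case (Suc k')
    then show ?thesis
      using order_trans[OF order_trans[OF keys_const_mult keys_power_sums_ge[OF assms(1), of k, simplified]]
          sums_ge_antimono[of 1 k]] by simp
  qed (simp add: assms(2))
  then show ?thesis unfolding fps_eval_def by (intro order_trans[OF keys_sum] UN_least)
qed

text \<open>The terms with \<open>i + j > height\<close> lie in \<open>sums_ge (Suc height)\<close>.\<close>
lemma trunc_eq_square_triangle_sum: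
  fixes u v :: "'m \<Rightarrow>\<^sub>0 'k::comm_ring_1" and c :: "nat \<Rightarrow> nat \<Rightarrow> 'k"
  assumes u: "keys u \<subseteq> sums_ge 1" and v: "keys v \<subseteq> sums_ge 1"
  shows "(\<Sum>i\<le>height. \<Sum>j\<le>height. const_pm (c i j) * u ^ i * v ^ j)
           \<simeq> (\<Sum>k\<le>height. \<Sum>i\<le>k. const_pm (c i (k - i)) * u ^ i * v ^ (k - i))"
proof -
  define t where "t i j = const_pm (c i j) * u ^ i * v ^ j" for i j
  define D where "D = {(i, j). i + j \<le> height}"
  define R where "R = (\<Sum>(i, j)\<in>{..height} \<times> {..height} - D. t i j)"
  have keys_t: "keys (t i j) \<subseteq> sums_ge (Suc height)" if "(i, j) \<notin> D" for i j
  proof -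
    have "keys (const_pm (c i j) * u ^ i) \<subseteq> sums_ge i"
      using order_trans[OF keys_const_mult keys_power_sums_ge[OF u, of i]] by simp
    then have "keys (t i j) \<subseteq> sums_ge (i + j)"
      unfolding t_def using keys_mult_sums_ge keys_power_sums_ge[OF v, of j] by simp
    moreover have "Suc height \<le> i + j" using that by (simp add: D_def)
    ultimately show ?thesis using sums_ge_antimono by blast
  qed
  have "keys R \<subseteq> (\<Union>p\<in>{..height} \<times> {..height} - D. keys (case p of (i, j) \<Rightarrow> t i j))"
    unfolding R_def by (rule keys_sum)
  also have "\<dots> \<subseteq> sums_ge (Suc height)" using keys_t by auto
  finally have "R + (\<Sum>(i, j)\<in>D. t i j) \<simeq> 0 + (\<Sum>(i, j)\<in>D. t i j)"
    by (intro trunc_eq_add trunc_eq_zero trunc_eq_refl)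
  moreover have "(\<Sum>(i, j)\<in>{..height} \<times> {..height}. t i j) = R + (\<Sum>(i, j)\<in>D. t i j)"
    unfolding R_def by (rule sum.subset_diff) (auto simp: D_def)
  ultimately show ?thesis
    unfolding D_def sum.triangle_reindex_eq t_def[symmetric] by (simp add: sum.cartesian_product)
qed

lemma fps_eval_one: "fps_eval 1 x = (1 :: 'm \<Rightarrow>\<^sub>0 'k::comm_ring_1)"
proof -
  have "fps_eval 1 x = (\<Sum>k\<in>{0}. const_pm ((1 :: 'k fps) $ k) * x ^ k)"
    unfolding fps_eval_def by (rule sum.mono_neutral_right) auto
  then show ?thesis by simp
qed

lemma fps_eval_zero: "fps_eval F 0 = (const_pm (F $ 0) :: 'm \<Rightarrow>\<^sub>0 'k::comm_ring_1)"
proof -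
  have "fps_eval F 0 = (\<Sum>k\<in>{0}. const_pm (F $ k) * (0 :: 'm \<Rightarrow>\<^sub>0 'k) ^ k)"
    unfolding fps_eval_def by (rule sum.mono_neutral_right) (auto simp: power_0_left)
  then show ?thesis by simp
qed

lemma trunc_eq_fps_eval:
  fixes x y :: "'m \<Rightarrow>\<^sub>0 'k::comm_ring_1"
  assumes "keys x \<subseteq> sums_ge 0" "keys y \<subseteq> sums_ge 0" "x \<simeq> y"
  shows "fps_eval F x \<simeq> fps_eval F y"
  unfolding fps_eval_def using assms by (intro trunc_eq_sum trunc_eq_const_mult trunc_eq_power)

lemma fps_eval_mult:
  fixes x :: "'m \<Rightarrow>\<^sub>0 'k::comm_ring_1"
  assumes x: "keys x \<subseteq> sums_ge 1"
  shows "fps_eval F x * fps_eval H x \<simeq> fps_eval (F * H) x"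
proof -
  have "fps_eval F x * fps_eval H x = (\<Sum>i\<le>height. \<Sum>j\<le>height. const_pm (F $ i * H $ j) * x ^ i * x ^ j)"
    unfolding fps_eval_def sum_product by (intro sum.cong refl) (simp add: const_pm_mult algebra_simps)
  moreover have "const_pm ((F * H) $ k) * x ^ k
      = (\<Sum>i\<le>k. const_pm (F $ i * H $ (k - i)) * x ^ i * x ^ (k - i))" for k
  proof -
    have "const_pm ((F * H) $ k) * x ^ k = (\<Sum>i\<le>k. const_pm (F $ i * H $ (k - i)) * x ^ k)"
      by (simp add: fps_mult_nth atLeast0AtMost const_pm_sum sum_distrib_right)
    also have "\<dots> = (\<Sum>i\<le>k. const_pm (F $ i * H $ (k - i)) * x ^ i * x ^ (k - i))"
      by (intro sum.cong refl) (simp add: power_add[symmetric] mult.assoc)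
    finally show ?thesis .
  qed
  ultimately show ?thesis
    using trunc_eq_square_triangle_sum[OF x x, of "\<lambda>i j. F $ i * H $ j"] by (simp add: fps_eval_def)
qed

lemma fps_eval_power:
  fixes x :: "'m \<Rightarrow>\<^sub>0 'k::comm_ring_1"
  assumes x: "keys x \<subseteq> sums_ge 1"
  shows "fps_eval (F ^ j) x \<simeq> fps_eval F x ^ j"
proof (induction j)
  case 0
  show ?case by (simp add: fps_eval_one)
next
  case (Suc j)
  have F: "keys (fps_eval F x) \<subseteq> sums_ge 0" by (rule keys_fps_eval[OF x])
  have "fps_eval (F ^ Suc j) x \<simeq> fps_eval F x * fps_eval (F ^ j) x"
    using fps_eval_mult[OF x, of F "F ^ j"] by (simp add: trunc_eq_sym)
  also have "\<dots> \<simeq> fps_eval F x * fps_eval F x ^ j"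
    using keys_fps_eval[OF x] keys_power_sums_ge[OF F, of j] Suc by (intro trunc_eq_mult) auto
  finally show ?case by simp
qed

lemma fps_eval_compose:
  fixes x :: "'m \<Rightarrow>\<^sub>0 'k::comm_ring_1"
  assumes x: "keys x \<subseteq> sums_ge 1" and H0: "H $ 0 = 0"
  shows "fps_eval (F oo H) x \<simeq> fps_eval F (fps_eval H x)"
proof -
  have "const_pm ((F oo H) $ k) * x ^ k = (\<Sum>n\<le>height. const_pm (F $ n * (H ^ n) $ k) * x ^ k)"
    if "k \<le> height" for k
  proof -
    have "const_pm ((F oo H) $ k) * x ^ k = (\<Sum>n\<le>k. const_pm (F $ n * (H ^ n) $ k) * x ^ k)"
      by (simp add: fps_compose_nth atLeast0AtMost const_pm_sum sum_distrib_right)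
    also have "\<dots> = (\<Sum>n\<le>height. const_pm (F $ n * (H ^ n) $ k) * x ^ k)"
      using that startsby_zero_power_prefix[OF H0] by (intro sum.mono_neutral_left) auto
    finally show ?thesis .
  qed
  then have "fps_eval (F oo H) x = (\<Sum>k\<le>height. \<Sum>n\<le>height. const_pm (F $ n * (H ^ n) $ k) * x ^ k)"
    unfolding fps_eval_def by (intro sum.cong) auto
  also have "\<dots> = (\<Sum>n\<le>height. const_pm (F $ n) * fps_eval (H ^ n) x)"
    unfolding fps_eval_def sum_distrib_left by (subst sum.swap) (simp add: const_pm_mult mult.assoc)
  also have "\<dots> \<simeq> (\<Sum>n\<le>height. const_pm (F $ n) * fps_eval H x ^ n)"
    by (intro trunc_eq_sum trunc_eq_const_mult fps_eval_power[OF x])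
  finally show ?thesis by (simp add: fps_eval_def)
qed

lemma fps_eval_exp_add:
  fixes x y :: "'m \<Rightarrow>\<^sub>0 'k::field_char_0"
  assumes x: "keys x \<subseteq> sums_ge 1" and y: "keys y \<subseteq> sums_ge 1"
  shows "fps_eval (fps_exp 1) (x + y) \<simeq> fps_eval (fps_exp 1) x * fps_eval (fps_exp 1) y"
proof -
  define a :: "nat \<Rightarrow> 'k" where "a n = 1 / fact n" for n
  have exp_nth: "fps_exp 1 $ n = a n" for n by (simp add: a_def)
  have binomial: "const_pm (a k) * of_nat (k choose i) = (const_pm (a i * a (k - i)) :: 'm \<Rightarrow>\<^sub>0 'k)"
    if "i \<le> k" for i k
  proof -
    have "a k * of_nat (k choose i) = a i * a (k - i)"
      using that by (simp add: a_def binomial_fact field_simps)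
    then show ?thesis by (metis const_pm_mult single_of_nat)
  qed
  have "fps_eval (fps_exp 1) (x + y) = (\<Sum>k\<le>height. \<Sum>i\<le>k. const_pm (a i * a (k - i)) * x ^ i * y ^ (k - i))"
    unfolding fps_eval_def exp_nth binomial_ring sum_distrib_left
    by (intro sum.cong refl) (simp add: binomial mult.assoc[symmetric])
  moreover have "fps_eval (fps_exp 1) x * fps_eval (fps_exp 1) y
      = (\<Sum>i\<le>height. \<Sum>j\<le>height. const_pm (a i * a j) * x ^ i * y ^ j)"
    unfolding fps_eval_def sum_product exp_nth by (intro sum.cong refl) (simp add: const_pm_mult algebra_simps)
  ultimately show ?thesis
    using trunc_eq_square_triangle_sum[OF x y, of "\<lambda>i j. a i * a j"] by (simp add: trunc_eq_sym)
qed

lemma fps_eval_exp_ln: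
  fixes x :: "'m \<Rightarrow>\<^sub>0 'k::field_char_0"
  assumes x: "keys x \<subseteq> sums_ge 1"
  shows "fps_eval (fps_exp 1) (fps_eval (fps_ln 1) x) \<simeq> 1 + x"
proof -
  have "fps_eval (fps_exp 1) (fps_eval (fps_ln 1) x) \<simeq> fps_eval (1 + fps_X) x"
    using fps_eval_compose[OF x, of "fps_ln 1" "fps_exp 1"] by (simp add: fps_exp_compose_ln trunc_eq_sym)
  also have "fps_eval (1 + fps_X) x \<simeq> 1 + x"
  proof (cases height)
    case 0
    then have "x \<simeq> 0" using x by (intro trunc_eq_zero) simp
    moreover have "fps_eval (1 + fps_X) x = 1" by (simp add: fps_eval_def 0)
    ultimately show ?thesis by (simp add: trunc_eq_def lookup_add)
  next
    case (Suc h)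
    have "fps_eval (1 + fps_X) x = (\<Sum>k\<in>{0, 1}. const_pm ((1 + fps_X) $ k) * x ^ k)"
      unfolding fps_eval_def by (rule sum.mono_neutral_right) (auto simp: Suc)
    then show ?thesis by simp
  qed
  finally show ?thesis .
qed

lemma fps_eval_exp_sum_ln:
  fixes e :: "'i \<Rightarrow> 'm \<Rightarrow>\<^sub>0 'k::field_char_0"
  assumes "finite J" "\<And>i. i \<in> J \<Longrightarrow> keys (e i) \<subseteq> sums_ge 1"
  shows "fps_eval (fps_exp 1) (\<Sum>i\<in>J. fps_eval (fps_ln 1) (e i)) \<simeq> (\<Prod>i\<in>J. 1 + e i)"
  using assms
proof (induction J rule: finite_induct)
  case empty
  have "fps_eval (fps_exp 1) 0 = (\<Sum>k\<in>{0}. const_pm (fps_exp (1 :: 'k) $ k) * (0 :: 'm \<Rightarrow>\<^sub>0 'k) ^ k)"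
    unfolding fps_eval_def by (rule sum.mono_neutral_right) auto
  then show ?case by simp
next
  case (insert i J)
  define l where "l j = fps_eval (fps_ln 1) (e j)" for j
  have ei: "keys (e i) \<subseteq> sums_ge 1" using insert by simp
  have li: "keys (l i) \<subseteq> sums_ge 1" unfolding l_def by (rule keys_fps_eval_sums_ge_1[OF ei]) simp
  have lJ: "keys (\<Sum>j\<in>J. l j) \<subseteq> sums_ge 1"
  proof -
    have "keys (l j) \<subseteq> sums_ge 1" if "j \<in> J" for j
      unfolding l_def using that insert.prems by (intro keys_fps_eval_sums_ge_1) auto
    then show ?thesis using keys_sum[of l J] by blast
  qed
  have "fps_eval (fps_exp 1) (\<Sum>j\<in>insert i J. l j) = fps_eval (fps_exp 1) (l i + (\<Sum>j\<in>J. l j))"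
    using insert by simp
  also have "\<dots> \<simeq> fps_eval (fps_exp 1) (l i) * fps_eval (fps_exp 1) (\<Sum>j\<in>J. l j)"
    by (rule fps_eval_exp_add[OF li lJ])
  also have "\<dots> \<simeq> (1 + e i) * (\<Prod>j\<in>J. 1 + e j)"
  proof (rule trunc_eq_mult)
    show "keys (fps_eval (fps_exp 1) (l i)) \<subseteq> sums_ge 0" by (rule keys_fps_eval[OF li])
    show "keys (fps_eval (fps_exp 1) (\<Sum>j\<in>J. l j)) \<subseteq> sums_ge 0" by (rule keys_fps_eval[OF lJ])
    show "keys (1 + e i) \<subseteq> sums_ge 0" by (rule keys_one_plus_sums_ge[OF ei])
    show "keys (\<Prod>j\<in>J. 1 + e j) \<subseteq> sums_ge 0"
      using insert.prems by (intro keys_prod_sums_ge keys_one_plus_sums_ge) auto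
    show "fps_eval (fps_exp 1) (l i) \<simeq> 1 + e i" unfolding l_def by (rule fps_eval_exp_ln[OF ei])
    show "fps_eval (fps_exp 1) (\<Sum>j\<in>J. l j) \<simeq> (\<Prod>j\<in>J. 1 + e j)"
      using insert unfolding l_def by simp
  qed
  finally show ?case using insert unfolding l_def by simp
qed

lemma trunc_hcompose:
  fixes h :: "'m \<Rightarrow> 'k::field_char_0"
  assumes h: "hsupp h \<subseteq> sums_ge 1"
  shows "trunc (hcompose F h) \<simeq> fps_eval F (trunc h)"
proof (unfold trunc_eq_def, intro ballI)
  fix n assume n: "n \<in> factors"
  have h0: "hsupp h \<subseteq> sums_ge 0" using h sums_ge_antimono[of 0 1] by simp
  have "{k. hscale (F $ k) (hpow h k) n \<noteq> 0} \<subseteq> {..height}"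
  proof
    fix k assume "k \<in> {k. hscale (F $ k) (hpow h k) n \<noteq> 0}"
    then have "n \<in> sums_ge k" using hsupp_hpow_sums_ge[OF h, of k] by (auto simp: hscale_def hsupp_def)
    then show "k \<in> {..height}" using factor_in_sums_ge_le_height[OF n] by simp
  qed
  then have "hcompose F h n = (\<Sum>k\<le>height. F $ k * hpow h k n)"
    unfolding hcompose_def hsum_def by (intro sum.mono_neutral_cong_left) (auto simp: hscale_def)
  also have "\<dots> = (\<Sum>k\<le>height. F $ k * lookup (trunc h ^ k) n)"
    using trunc_hpow[OF h0] n by (intro sum.cong) (auto simp: trunc_eq_def lookup_trunc)
  finally show "lookup (trunc (hcompose F h)) n = lookup (fps_eval F (trunc h)) n"
    using n by (simp add: lookup_trunc fps_eval_def lookup_sum lookup_const_mult)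
qed

section \<open>The exponential of a sum of logarithms\<close>

lemma trunc_hprod:
  fixes F :: "'i \<Rightarrow> 'm \<Rightarrow> 'k::comm_ring_1"
  assumes E: "finite E" and F: "\<And>i. i \<in> E \<Longrightarrow> hsupp (F i) \<subseteq> sums_ge 0"
  shows "trunc (hprod F E) \<simeq> (\<Prod>i\<in>E. trunc (F i))"
proof (unfold trunc_eq_def, intro ballI)
  fix n assume n: "n \<in> factors"
  define B where "B = {a \<in> E \<rightarrow>\<^sub>E UNIV. (\<Sum>i\<in>E. a i) = n \<and> (\<forall>i\<in>E. F i (a i) \<noteq> 0)}"
  define B' where "B' = {a \<in> E \<rightarrow>\<^sub>E factors. (\<Sum>i\<in>E. a i) = n}"
  have in_factors: "a i \<in> factors" if "a \<in> B" "i \<in> E" for a i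
    using that F by (intro summand_in_factors[OF n E]) (auto simp: B_def hsupp_def)
  have "hprod F E n = (\<Sum>a\<in>B. \<Prod>i\<in>E. F i (a i))" by (simp add: hprod_def B_def)
  also have "\<dots> = (\<Sum>a\<in>B'. \<Prod>i\<in>E. lookup (trunc (F i)) (a i))"
  proof (rule sum.mono_neutral_cong_left)
    show "finite B'"
      unfolding B'_def by (rule finite_subset[OF _ finite_PiE[OF E finite_factors]]) blast
    show "B \<subseteq> B'" using in_factors by (auto simp: B_def B'_def PiE_iff)
    show "\<forall>a\<in>B' - B. (\<Prod>i\<in>E. lookup (trunc (F i)) (a i)) = 0"
    proof
      fix a assume "a \<in> B' - B"
      then obtain i where "i \<in> E" "F i (a i) = 0" by (auto simp: B_def B'_def PiE_iff)
      then show "(\<Prod>i\<in>E. lookup (trunc (F i)) (a i)) = 0"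
        using E by (intro prod_zero) (auto simp: lookup_trunc)
    qed
    show "(\<Prod>i\<in>E. F i (a i)) = (\<Prod>i\<in>E. lookup (trunc (F i)) (a i))" if "a \<in> B" for a
      using in_factors[OF that] by (intro prod.cong) (auto simp: lookup_trunc)
  qed
  also have "\<dots> = lookup (\<Prod>i\<in>E. trunc (F i)) n"
    unfolding B'_def using E finite_factors keys_trunc by (intro lookup_prod_eq_sum_PiE[symmetric]) auto
  finally show "lookup (trunc (hprod F E)) n = lookup (\<Prod>i\<in>E. trunc (F i)) n"
    using n by (simp add: lookup_trunc)
qed

lemma finite_nonzero_truncations:
  assumes "\<And>x. finite {i \<in> I. F i x \<noteq> 0}"
  shows "finite {i \<in> I. trunc (F i) \<noteq> 0}"
proof -
  have "{i \<in> I. trunc (F i) \<noteq> 0} \<subseteq> (\<Union>s\<in>factors. {i \<in> I. F i s \<noteq> 0})"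
    by (auto simp: poly_mapping_eq_iff fun_eq_iff lookup_trunc split: if_splits)
  then show ?thesis using finite_factors assms by (auto intro: finite_subset)
qed

context
  fixes \<epsilon> :: "'i \<Rightarrow> 'm \<Rightarrow> 'k::field_char_0" and I J :: "'i set"
  assumes J: "finite J" "J \<subseteq> I" "\<And>i. i \<in> I - J \<Longrightarrow> trunc (\<epsilon> i) = 0"
    and infinitesimal: "\<And>i. i \<in> I \<Longrightarrow> hsupp (\<epsilon> i) \<subseteq> sums_ge 1"
begin

lemma trunc_hsum_hlog1p:
  "trunc (hsum (\<lambda>i. hlog1p (\<epsilon> i)) I) \<simeq> (\<Sum>i\<in>J. fps_eval (fps_ln 1) (trunc (\<epsilon> i)))"
proof (unfold trunc_eq_def, intro ballI)
  fix n assume n: "n \<in> factors"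
  have log: "hlog1p (\<epsilon> i) n = lookup (fps_eval (fps_ln 1) (trunc (\<epsilon> i))) n" if "i \<in> I" for i
    using trunc_hcompose[OF infinitesimal[OF that], of "fps_ln 1"] n
    by (simp add: hlog1p_eq_hcompose trunc_eq_def lookup_trunc)
  have log0: "hlog1p (\<epsilon> i) n = 0" if "i \<in> I - J" for i
    using log J(3) that by (simp add: fps_eval_zero)
  have "hsum (\<lambda>i. hlog1p (\<epsilon> i)) I n = (\<Sum>i\<in>J. hlog1p (\<epsilon> i) n)"
    unfolding hsum_def
  proof (rule sum.mono_neutral_left[OF J(1)])
    show "{i \<in> I. hlog1p (\<epsilon> i) n \<noteq> 0} \<subseteq> J" using log0 by blast
    show "\<forall>i\<in>J - {i \<in> I. hlog1p (\<epsilon> i) n \<noteq> 0}. hlog1p (\<epsilon> i) n = 0" using J(2) by blast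
  qed
  also have "\<dots> = lookup (\<Sum>i\<in>J. fps_eval (fps_ln 1) (trunc (\<epsilon> i))) n"
    using J(2) log by (simp add: lookup_sum subset_iff)
  finally show "lookup (trunc (hsum (\<lambda>i. hlog1p (\<epsilon> i)) I)) n =
      lookup (\<Sum>i\<in>J. fps_eval (fps_ln 1) (trunc (\<epsilon> i))) n"
    using n by (simp add: lookup_trunc)
qed

lemma hprod_coeff_eq_lookup_prod:
  assumes "finite E" "E \<subseteq> I" "n \<in> factors"
  shows "hprod \<epsilon> E n = lookup (\<Prod>i\<in>E. trunc (\<epsilon> i)) n"
proof -
  have "hsupp (\<epsilon> i) \<subseteq> sums_ge 0" if "i \<in> E" for i
    using infinitesimal assms(2) that sums_ge_antimono[of 0 1] by blast
  then show ?thesis using trunc_hprod[OF assms(1)] assms(3) by (auto simp: trunc_eq_def lookup_trunc)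
qed

lemma hprod_coeff_nonzero_subset:
  assumes "finite E" "E \<subseteq> I" "n \<in> factors" "hprod \<epsilon> E n \<noteq> 0"
  shows "E \<subseteq> J"
proof
  fix i assume "i \<in> E"
  show "i \<in> J"
  proof (rule ccontr)
    assume "i \<notin> J"
    then have "(\<Prod>i\<in>E. trunc (\<epsilon> i)) = 0"
      using J(3) \<open>i \<in> E\<close> assms(1,2) by (intro prod_zero) auto
    then show False using hprod_coeff_eq_lookup_prod[OF assms(1-3)] assms(4) by simp
  qed
qed

lemma finite_hprod_coeff_nonzero:
  assumes "n \<in> factors"
  shows "finite {E. finite E \<and> E \<subseteq> I \<and> hprod \<epsilon> E n \<noteq> 0}"
proof (rule finite_subset)
  show "{E. finite E \<and> E \<subseteq> I \<and> hprod \<epsilon> E n \<noteq> 0} \<subseteq> Pow J"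
    using hprod_coeff_nonzero_subset assms by blast
qed (simp add: J(1))

lemma hsum_hprod_eq_lookup_prod:
  assumes n: "n \<in> factors"
  shows "hsum (hprod \<epsilon>) {E. finite E \<and> E \<subseteq> I} n = lookup (\<Prod>i\<in>J. 1 + trunc (\<epsilon> i)) n"
proof -
  have subset_J: "finite E \<and> E \<subseteq> I" if "E \<in> Pow J" for E
    using that J(1,2) finite_subset by auto
  have "hsum (hprod \<epsilon>) {E. finite E \<and> E \<subseteq> I} n = (\<Sum>E\<in>Pow J. hprod \<epsilon> E n)"
    unfolding hsum_def
  proof (rule sum.mono_neutral_left)
    show "{E \<in> {E. finite E \<and> E \<subseteq> I}. hprod \<epsilon> E n \<noteq> 0} \<subseteq> Pow J"
      using hprod_coeff_nonzero_subset n by blast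
    show "\<forall>E\<in>Pow J - {E \<in> {E. finite E \<and> E \<subseteq> I}. hprod \<epsilon> E n \<noteq> 0}. hprod \<epsilon> E n = 0"
      using subset_J by blast
  qed (simp add: J(1))
  also have "\<dots> = (\<Sum>E\<in>Pow J. lookup (\<Prod>i\<in>E. trunc (\<epsilon> i)) n)"
    using subset_J hprod_coeff_eq_lookup_prod n by (intro sum.cong) simp_all
  also have "\<dots> = lookup (\<Prod>i\<in>J. trunc (\<epsilon> i) + 1) n"
    using prod_add[OF J(1), of "\<lambda>i. trunc (\<epsilon> i)" "\<lambda>_. 1"] by (simp add: lookup_sum)
  finally show ?thesis by (simp add: add.commute)
qed

end

lemma coeff_hexp_hsum_hlog1p:
  fixes \<epsilon> :: "'i \<Rightarrow> 'm \<Rightarrow> 'k::field_char_0"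
  assumes supp: "\<And>i. i \<in> I \<Longrightarrow> hsupp (\<epsilon> i) \<subseteq> S" and fin: "\<And>x. finite {i \<in> I. \<epsilon> i x \<noteq> 0}"
    and m: "m \<in> sums_ge 0"
  shows "finite {E. finite E \<and> E \<subseteq> I \<and> hprod \<epsilon> E m \<noteq> 0}"
    and "hexp (hsum (\<lambda>i. hlog1p (\<epsilon> i)) I) m = hsum (hprod \<epsilon>) {E. finite E \<and> E \<subseteq> I} m"
proof -
  define J where "J = {i \<in> I. trunc (\<epsilon> i) \<noteq> 0}"
  define L where "L = hsum (\<lambda>i. hlog1p (\<epsilon> i)) I"
  have J: "finite J" "J \<subseteq> I" "\<And>i. i \<in> I - J \<Longrightarrow> trunc (\<epsilon> i) = 0"
    using finite_nonzero_truncations[OF fin] by (auto simp: J_def)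
  have infinitesimal: "hsupp (\<epsilon> i) \<subseteq> sums_ge 1" if "i \<in> I" for i
    using supp[OF that] generators_subset_sums_ge by (rule order_trans)
  have keys_eps: "keys (trunc (\<epsilon> i)) \<subseteq> sums_ge 1" if "i \<in> I" for i
    using keys_trunc[of "\<epsilon> i"] infinitesimal[OF that] by auto
  have m': "m \<in> factors" by (rule self_in_factors[OF m])
  show "finite {E. finite E \<and> E \<subseteq> I \<and> hprod \<epsilon> E m \<noteq> 0}"
    by (rule finite_hprod_coeff_nonzero[OF J infinitesimal m'])
  have L: "hsupp L \<subseteq> sums_ge 1"
    unfolding L_def by (rule hsupp_hsum_hlog1p_sums_ge[OF infinitesimal])
  have logs: "keys (\<Sum>i\<in>J. fps_eval (fps_ln 1) (trunc (\<epsilon> i))) \<subseteq> sums_ge 0"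
  proof -
    have "keys (fps_eval (fps_ln 1) (trunc (\<epsilon> i))) \<subseteq> sums_ge 0" if "i \<in> J" for i
      using that J(2) by (intro keys_fps_eval keys_eps) blast
    then show ?thesis by (intro order_trans[OF keys_sum] UN_least)
  qed
  have "hexp L m = lookup (fps_eval (fps_exp 1) (trunc L)) m"
    using trunc_hcompose[OF L, of "fps_exp 1"] m' by (simp add: hexp_eq_hcompose trunc_eq_def lookup_trunc)
  also have "\<dots> = lookup (fps_eval (fps_exp 1) (\<Sum>i\<in>J. fps_eval (fps_ln 1) (trunc (\<epsilon> i)))) m"
    using trunc_eq_fps_eval[OF keys_trunc_sums_ge logs trunc_hsum_hlog1p[OF J infinitesimal]] m'
    by (simp add: trunc_eq_def L_def)
  also have "\<dots> = lookup (\<Prod>i\<in>J. 1 + trunc (\<epsilon> i)) m"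
    using fps_eval_exp_sum_ln[OF J(1), of "\<lambda>i. trunc (\<epsilon> i)"] keys_eps J(2) m'
    by (auto simp: trunc_eq_def)
  also have "\<dots> = hsum (hprod \<epsilon>) {E. finite E \<and> E \<subseteq> I} m"
    by (rule hsum_hprod_eq_lookup_prod[OF J infinitesimal m', symmetric])
  finally show "hexp (hsum (\<lambda>i. hlog1p (\<epsilon> i)) I) m = hsum (hprod \<epsilon>) {E. finite E \<and> E \<subseteq> I} m"
    by (simp add: L_def)
qed

end

context infinitesimal_generators
begin

context
  fixes \<epsilon> :: "'i \<Rightarrow> 'm \<Rightarrow> 'k::field_char_0" and I :: "'i set"
  assumes supp: "\<And>i. i \<in> I \<Longrightarrow> hsupp (\<epsilon> i) \<subseteq> S" and fin: "\<And>x. finite {i \<in> I. \<epsilon> i x \<noteq> 0}"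
begin

lemma hprod_eq_0_outside_sums_ge:
  assumes "x \<notin> sums_ge 0" "E \<subseteq> I"
  shows "hprod \<epsilon> E x = 0"
proof -
  have "hsupp (\<epsilon> i) \<subseteq> sums_ge 0" if "i \<in> E" for i
    using supp generators_subset_sums_ge sums_ge_antimono[of 0 1] that assms(2) by blast
  then have "hsupp (hprod \<epsilon> E) \<subseteq> sums_ge 0" by (rule hsupp_hprod_sums_ge)
  with assms(1) show ?thesis by (auto simp: hsupp_def)
qed

lemma hsummable_hprod: "hsummable (hprod \<epsilon>) {E. finite E \<and> E \<subseteq> I}"
  unfolding hsummable_def
proof (intro conjI allI)
  show "well_based (\<Union>E\<in>{E. finite E \<and> E \<subseteq> I}. hsupp (hprod \<epsilon> E))"
    using hprod_eq_0_outside_sums_ge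
    by (intro well_based_subset[OF well_based_sums_ge]) (auto simp: hsupp_def)
  fix x
  show "finite {E \<in> {E. finite E \<and> E \<subseteq> I}. hprod \<epsilon> E x \<noteq> 0}"
  proof (cases "x \<in> sums_ge 0")
    case True
    interpret truncation S x by unfold_locales
    show ?thesis using coeff_hexp_hsum_hlog1p(1)[OF supp fin True] by simp
  next
    case False
    then have "{E \<in> {E. finite E \<and> E \<subseteq> I}. hprod \<epsilon> E x \<noteq> 0} = {}"
      using hprod_eq_0_outside_sums_ge by blast
    then show ?thesis by (metis finite.emptyI)
  qed
qed

lemma hexp_hsum_hlog1p_eq_hsum_hprod:
  "hexp (hsum (\<lambda>i. hlog1p (\<epsilon> i)) I) = hsum (hprod \<epsilon>) {E. finite E \<and> E \<subseteq> I}"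
proof
  fix x
  show "hexp (hsum (\<lambda>i. hlog1p (\<epsilon> i)) I) x = hsum (hprod \<epsilon>) {E. finite E \<and> E \<subseteq> I} x"
  proof (cases "x \<in> sums_ge 0")
    case True
    interpret truncation S x by unfold_locales
    show ?thesis by (rule coeff_hexp_hsum_hlog1p(2)[OF supp fin True])
  next
    case False
    have "hsupp (hexp (hsum (\<lambda>i. hlog1p (\<epsilon> i)) I)) \<subseteq> sums_ge 0"
      using supp generators_subset_sums_ge unfolding hexp_eq_hcompose
      by (intro hsupp_hcompose_sums_ge hsupp_hsum_hlog1p_sums_ge) blast+
    then show ?thesis
      using False hprod_eq_0_outside_sums_ge by (auto simp: hsupp_def hsum_def)
  qed
qed

end

end

theorem lemma2p7:
  fixes \<epsilon> :: "'i \<Rightarrow> 'm::linordered_ab_group_add \<Rightarrow> 'k::field_char_0"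
    and I :: "'i set"
  assumes infinitesimal: "\<And>i. i \<in> I \<Longrightarrow> is_hahn_infinitesimal (\<epsilon> i)"
    and summable: "hsummable \<epsilon> I"
  shows "hsummable (hprod \<epsilon>) {E. finite E \<and> E \<subseteq> I} \<and>
         hexp (hsum (\<lambda>i. hlog1p (\<epsilon> i)) I) = hsum (hprod \<epsilon>) {E. finite E \<and> E \<subseteq> I}"
proof -
  define S where "S = (\<Union>i\<in>I. hsupp (\<epsilon> i))"
  interpret infinitesimal_generators S
    using infinitesimal summable
    by unfold_locales (auto simp: S_def is_hahn_infinitesimal_def hsummable_def)
  have "\<And>i. i \<in> I \<Longrightarrow> hsupp (\<epsilon> i) \<subseteq> S" by (auto simp: S_def)
  moreover have "\<And>x. finite {i \<in> I. \<epsilon> i x \<noteq> 0}" using summable by (simp add: hsummable_def)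
  ultimately show ?thesis using hsummable_hprod hexp_hsum_hlog1p_eq_hsum_hprod by blast
qed

end
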